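(* Let $q=2^f$ with $f$ odd, and let $q_0<q$ be a power of $2$. Then there exist at least $2(q+1)/3$ elements $u\in\mathbb{F}_q$ such that the polynomial $X^{q_0+1}+uX^{q_0}+(u+1)X+1$ has no roots in $\mathbb{F}_q$. *)

theory Defs
  imports Complex_Main "HOL-Library.Cardinality"
begin

end

theory Submission
  imports Defs
begin

text \<open>
  Write P_u(X) = X^(q0+1) + u X^q0 + (u + 1) X + 1 and sigma(x) = 1/(x + 1).
  In characteristic 2 the map sigma has order 3 on F_q - {0, 1}, and
  P_u(sigma x) (x + 1)^(q0+1) = P_u(x), so the roots of P_u form a union of
  sigma-orbits. A fixed point of sigma is a root of X^2 + X + 1, i.e. a
  primitive cube root of unity, which does not exist because q - 1 = 2^f - 1
  is prime to 3 for odd f; so every orbit has 3 elements. Root sets of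
  different P_u are disjoint, since P_u - P_v = (u + v)(X^q0 + X) and
  x^q0 = x forces P_u(x) = x^2 + x + 1 \<noteq> 0, and they avoid 0 and 1.
  Hence at most (q - 2)/3 values of u give a polynomial with a root.
\<close>

lemma of_nat_CARD_eq_0: "of_nat CARD('a) = (0::'a::{ring_1,finite})"
proof -
  have "(\<Sum>y\<in>UNIV. 1 + y) = (\<Sum>y::'a\<in>UNIV. y)"
    by (rule sum.reindex_bij_witness[of _ "\<lambda>y. y - 1" "\<lambda>y. 1 + y"]) auto
  then show ?thesis
    by (simp add: sum.distrib)
qed

lemma finite_field_power_card_minus_1:
  fixes a :: "'a::{field,finite}"
  assumes "a \<noteq> 0"
  shows "a ^ (CARD('a) - 1) = 1"
proof -
  let ?S = "UNIV - {0::'a}"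
  have "(\<Prod>y\<in>?S. a * y) = (\<Prod>y\<in>?S. y)"
    by (rule prod.reindex_bij_witness[of _ "\<lambda>y. y / a" "\<lambda>y. a * y"]) (use assms in auto)
  moreover have "(\<Prod>y\<in>?S. a * y) = a ^ card ?S * (\<Prod>y\<in>?S. y)"
    by (simp add: prod.distrib)
  moreover have "(\<Prod>y\<in>?S. y) \<noteq> 0"
    by simp
  moreover have "card ?S = CARD('a) - 1"
    by (simp add: card_Diff_subset)
  ultimately show ?thesis
    by simp
qed

lemma two_power_odd_mod_3:
  assumes "odd f"
  shows "(2::nat) ^ f mod 3 = 2"
proof -
  obtain m where f: "f = 2 * m + 1"
    using assms oddE by blast
  have "(4::nat) ^ m mod 3 = 1"
    using power_mod[of "4::nat" 3 m] by simp
  then have "2 * (4 ^ m mod 3) mod 3 = (2::nat)"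
    by simp
  then show ?thesis
    by (simp add: f power_add power_mult mod_mult_right_eq)
qed

lemma char_2_if_card_power_of_2:
  assumes "CARD('a::{field,finite}) = 2 ^ f"
  shows "(2::'a) = 0"
  using of_nat_CARD_eq_0[where 'a='a] assms by simp

lemma power_two_power_add_char_2:
  fixes x y :: "'a::comm_ring_1"
  assumes "(2::'a) = 0"
  shows "(x + y) ^ 2 ^ e = x ^ 2 ^ e + y ^ 2 ^ e"
proof (induction e)
  case (Suc e)
  then show ?case
    by (simp add: power_Suc2 power_mult power2_sum assms del: power_Suc)
qed simp

lemma char_2_minus_eq: "(2::'a::ring_1) = 0 \<Longrightarrow> - x = (x::'a)"
  by (metis minus_unique mult_2 mult_zero_left)

lemma no_cube_root_of_unity:
  fixes x :: "'a::{field,finite}"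
  assumes char_2: "(2::'a) = 0" and card_mod_3: "CARD('a) mod 3 = 2"
  shows "x\<^sup>2 + x + 1 \<noteq> 0"
proof
  assume root: "x\<^sup>2 + x + 1 = 0"
  then have "x \<noteq> 0"
    by auto
  have "x ^ 3 - 1 = (x - 1) * (x\<^sup>2 + x + 1)"
    by (simp add: algebra_simps power2_eq_square power3_eq_cube)
  then have cube: "x ^ 3 = 1"
    using root by simp
  have "CARD('a) - 1 = 3 * (CARD('a) div 3) + 1"
    using card_mod_3 div_mult_mod_eq[of "CARD('a)" 3] by linarith
  then have "x ^ (3 * (CARD('a) div 3) + 1) = 1"
    using finite_field_power_card_minus_1[OF \<open>x \<noteq> 0\<close>] by simp
  then have "x = 1"
    using cube by (simp add: power_mult)
  then show False
    using root char_2 by simp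
qed

definition Pol :: "nat \<Rightarrow> 'a \<Rightarrow> 'a \<Rightarrow> 'a::comm_ring_1" where
  "Pol e u x = x ^ (2 ^ e + 1) + u * x ^ 2 ^ e + (u + 1) * x + 1"

definition \<sigma> :: "'a \<Rightarrow> 'a::field" where
  "\<sigma> x = inverse (x + 1)"

lemma Pol_0 [simp]: "Pol e u 0 = 1"
  by (simp add: Pol_def power_0_left)

lemma Pol_1: "(2::'a::comm_ring_1) = 0 \<Longrightarrow> Pol e u (1::'a) = 1"
  by (simp add: Pol_def algebra_simps mult_2[symmetric])

lemma Pol_\<sigma>:
  fixes x :: "'a::field"
  assumes char_2: "(2::'a) = 0" and "x + 1 \<noteq> 0"
  shows "Pol e u (\<sigma> x) * (x + 1) ^ (2 ^ e + 1) = Pol e u x"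
proof -
  let ?q = "2 ^ e :: nat"
  let ?w = "x + 1"
  have inv_pow: "\<sigma> x ^ n * ?w ^ n = 1" for n
    using assms(2) by (simp add: \<sigma>_def power_mult_distrib[symmetric])
  have "\<sigma> x ^ ?q * ?w ^ (?q + 1) = ?w" "\<sigma> x * ?w ^ (?q + 1) = ?w ^ ?q"
    using inv_pow[of ?q] inv_pow[of 1] by (simp_all add: power_add mult.assoc[symmetric])
  then have "Pol e u (\<sigma> x) * ?w ^ (?q + 1) = 1 + u * ?w + (u + 1) * ?w ^ ?q + ?w ^ (?q + 1)"
    using inv_pow[of "?q + 1"] by (simp only: Pol_def distrib_right mult.assoc mult_1_left)
  also have "\<dots> = Pol e u x + 2 * (1 + u + x ^ ?q)"
    by (simp add: Pol_def power_two_power_add_char_2[OF char_2] algebra_simps power_add)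
  finally show ?thesis
    using char_2 by simp
qed

lemma Pol_root_neq_0_1:
  fixes x :: "'a::comm_ring_1"
  assumes "(2::'a) = 0" and "Pol e u x = 0"
  shows "x \<noteq> 0" and "x + 1 \<noteq> 0"
proof -
  show "x \<noteq> 0"
    using assms(2) by auto
  show "x + 1 \<noteq> 0"
  proof
    assume "x + 1 = 0"
    then have "x = - 1"
      by (simp add: eq_neg_iff_add_eq_0)
    then have "x = 1"
      using char_2_minus_eq[OF assms(1), of 1] by simp
    then show False
      using assms(2) Pol_1[OF assms(1)] by simp
  qed
qed

lemma Pol_root_\<sigma>:
  fixes x :: "'a::field"
  assumes char_2: "(2::'a) = 0" and "Pol e u x = 0"
  shows "Pol e u (\<sigma> x) = 0"
  using Pol_\<sigma>[OF char_2 Pol_root_neq_0_1(2)[OF assms], of e u] Pol_root_neq_0_1(2)[OF assms] assms(2)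
  by simp

lemma Pol_diff: "Pol e u x - Pol e v x = (u - v) * (x ^ 2 ^ e + x)"
  by (simp add: Pol_def algebra_simps)

lemma Pol_if_power_eq_self:
  fixes x :: "'a::comm_ring_1"
  assumes "(2::'a) = 0" and "x ^ 2 ^ e = x"
  shows "Pol e u x = x\<^sup>2 + x + 1"
proof -
  have "Pol e u x = x\<^sup>2 + x + 1 + 2 * (u * x)"
    using assms(2) by (simp add: Pol_def power_add power2_eq_square algebra_simps)
  then show ?thesis
    using assms(1) by simp
qed

lemma Pol_root_unique:
  fixes x :: "'a::field"
  assumes char_2: "(2::'a) = 0" and no_cube: "x\<^sup>2 + x + 1 \<noteq> 0"
    and "Pol e u x = 0" and "Pol e v x = 0"
  shows "u = v"
proof (rule ccontr)
  assume "u \<noteq> v"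
  then have "x ^ 2 ^ e + x = 0"
    using Pol_diff[of e u x v] assms(3,4) by simp
  then have "x ^ 2 ^ e = x"
    using char_2_minus_eq[OF char_2] by (metis add_eq_0_iff)
  then show False
    using Pol_if_power_eq_self[OF char_2] no_cube assms(3) by simp
qed

lemma \<sigma>_fixed_point:
  fixes x :: "'a::field"
  assumes char_2: "(2::'a) = 0" and fixed: "\<sigma> x = x"
  shows "x\<^sup>2 + x + 1 = 0"
proof -
  have "x + 1 \<noteq> 0"
    using fixed by (auto simp: \<sigma>_def)
  then have "x * (x + 1) = 1"
    using fixed by (metis \<sigma>_def left_inverse)
  then have "x\<^sup>2 + x + 1 = 2"
    by (simp add: algebra_simps power2_eq_square)
  then show ?thesis
    using char_2 by simp
qed

lemma \<sigma>_\<sigma>_\<sigma>: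
  fixes x :: "'a::field"
  assumes char_2: "(2::'a) = 0" and "x \<noteq> 0" and "x + 1 \<noteq> 0"
  shows "\<sigma> (\<sigma> (\<sigma> x)) = x"
proof -
  have "\<sigma> x + 1 = x / (x + 1)"
    using assms by (simp add: \<sigma>_def field_simps flip: mult_2)
  then have "\<sigma> (\<sigma> x) + 1 = inverse x"
    using assms by (simp add: \<sigma>_def field_simps flip: mult_2)
  then show ?thesis
    by (simp add: \<sigma>_def)
qed

lemma card_\<sigma>_orbit:
  fixes x :: "'a::field"
  assumes char_2: "(2::'a) = 0" and no_cube: "\<And>y::'a. y\<^sup>2 + y + 1 \<noteq> 0"
    and "x \<noteq> 0" and "x + 1 \<noteq> 0"
  shows "card {x, \<sigma> x, \<sigma> (\<sigma> x)} = 3"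
proof -
  have no_fixed_point: "\<sigma> y \<noteq> y" for y :: 'a
    using \<sigma>_fixed_point[OF char_2] no_cube by blast
  have "\<sigma> (\<sigma> x) \<noteq> x"
  proof
    assume "\<sigma> (\<sigma> x) = x"
    then have "\<sigma> x = \<sigma> (\<sigma> (\<sigma> x))"
      by simp
    then show False
      using \<sigma>_\<sigma>_\<sigma>[OF assms(1,3,4)] no_fixed_point by simp
  qed
  then show ?thesis
    using no_fixed_point[of x] no_fixed_point[of "\<sigma> x"] by simp
qed

lemma card_Pol_roots_ge_3:
  fixes x :: "'a::{field,finite}"
  assumes char_2: "(2::'a) = 0" and no_cube: "\<And>y::'a. y\<^sup>2 + y + 1 \<noteq> 0"
    and root: "Pol e u x = 0"
  shows "3 \<le> card {y. Pol e u y = 0}"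
proof -
  have "{x, \<sigma> x, \<sigma> (\<sigma> x)} \<subseteq> {y. Pol e u y = 0}"
    using root Pol_root_\<sigma>[OF char_2] by auto
  then have "card {x, \<sigma> x, \<sigma> (\<sigma> x)} \<le> card {y. Pol e u y = 0}"
    by (rule card_mono[OF finite])
  then show ?thesis
    using card_\<sigma>_orbit[OF char_2 no_cube Pol_root_neq_0_1[OF char_2 root]] by simp
qed

lemma card_Pol_has_root_le:
  assumes char_2: "(2::'a::{field,finite}) = 0" and no_cube: "\<And>y::'a. y\<^sup>2 + y + 1 \<noteq> 0"
  shows "3 * card {u::'a. \<exists>x. Pol e u x = 0} \<le> CARD('a) - 2"
proof -
  let ?B = "{u::'a. \<exists>x. Pol e u x = 0}"
  let ?roots = "\<lambda>u. {x. Pol e u x = 0}"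
  have "3 * card ?B = (\<Sum>u\<in>?B. 3)"
    by simp
  also have "\<dots> \<le> (\<Sum>u\<in>?B. card (?roots u))"
    by (rule sum_mono) (auto intro: card_Pol_roots_ge_3[OF char_2 no_cube])
  also have "\<dots> = card (\<Union>u\<in>?B. ?roots u)"
    by (rule card_UN_disjoint[symmetric]) (auto dest: Pol_root_unique[OF char_2 no_cube])
  also have "\<dots> \<le> card (UNIV - {0::'a, 1})"
    by (rule card_mono) (auto simp: Pol_1[OF char_2])
  also have "\<dots> = CARD('a) - 2"
    by (simp add: card_Diff_subset)
  finally show ?thesis .
qed

theorem lemma5p1:
  fixes f e :: nat
  assumes field_size: "CARD('a) = 2 ^ f"
    and f_odd: "odd f"
    and q0_lt: "(2::nat) ^ e < 2 ^ f"
  shows "2 * (real (2 ^ f) + 1) / 3 \<le>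
    real (card {u :: 'a::{field,finite}. \<forall>x :: 'a.
        x ^ (2 ^ e + 1) + u * x ^ (2 ^ e) + (u + 1) * x + 1 \<noteq> 0})"
proof -
  have char_2: "(2::'a) = 0"
    using field_size by (rule char_2_if_card_power_of_2)
  have no_cube: "y\<^sup>2 + y + 1 \<noteq> 0" for y :: 'a
    using no_cube_root_of_unity[OF char_2] two_power_odd_mod_3[OF f_odd] field_size by simp
  let ?B = "{u::'a. \<exists>x. Pol e u x = 0}"
  have rootless_eq:
    "{u :: 'a. \<forall>x :: 'a. x ^ (2 ^ e + 1) + u * x ^ (2 ^ e) + (u + 1) * x + 1 \<noteq> 0} = UNIV - ?B"
    by (auto simp: Pol_def)
  have "(2::nat) \<le> 2 ^ f"
    using f_odd by (cases f) simp_all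
  then have bound: "3 * card ?B + 2 \<le> 2 ^ f"
    using card_Pol_has_root_le[OF char_2 no_cube, of e] field_size by simp
  then have "3 * real (card ?B) + 2 \<le> 2 ^ f"
    using of_nat_mono[where 'a=real] by fastforce
  then show ?thesis
    using bound field_size unfolding rootless_eq by (simp add: card_Diff_subset of_nat_diff)
qed

end
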